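(* Let $r \geq 0$ and $k \geq 2$ be integers. Then the treewidth of the primal graph of the CNF $F_{r,k}$ is at most $2k-1$.
   Context: For a graph $G$, the CNF $CNF(G)$ has a variable $X_u$ for each vertex $u \in V(G)$ and a variable $X_{u,v}=X_{v,u}$ for each edge $\{u,v\} \in E(G)$; its clauses are $(X_u \vee X_{u,v} \vee X_v)$, one for each edge $\{u,v\} \in E(G)$. Let $T_r$ be the complete binary tree of height $r$ (it has $2^{r+1}-1$ nodes). $CT_{r,k}$ is the graph obtained from $T_r$ by replacing each node by a clique on $k$ vertices and, for every edge $\{a,b\}$ of $T_r$, making every vertex of the clique of $a$ adjacent to every vertex of the clique of $b$. $F_{r,k}=CNF(CT_{r,k})$. The primal graph of a CNF has the variables as vertices, two being adjacent iff they occur together in some clause. *)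

theory Defs
  imports Main
begin

type_synonym 'a graph = "'a set \<times> 'a set set"

definition verts :: "'a graph \<Rightarrow> 'a set" where "verts G = fst G"
definition edges :: "'a graph \<Rightarrow> 'a set set" where "edges G = snd G"

definition simple_graph :: "'a graph \<Rightarrow> bool" where
  "simple_graph G \<longleftrightarrow> finite (verts G) \<and>
     (\<forall>e\<in>edges G. e \<subseteq> verts G \<and> card e = 2)"

definition connected_in :: "'a graph \<Rightarrow> 'a set \<Rightarrow> bool" where
  "connected_in G S \<longleftrightarrow>
     (\<forall>x\<in>S. \<forall>y\<in>S. (x, y) \<in> {(a, b). {a, b} \<in> edges G \<and> a \<in> S \<and> b \<in> S}\<^sup>*)"

definition is_tree :: "'a graph \<Rightarrow> bool" where
  "is_tree T \<longleftrightarrow> simple_graph T \<and> verts T \<noteq> {} \<and>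
     connected_in T (verts T) \<and> card (edges T) = card (verts T) - 1"

definition tree_decomposition :: "'a graph \<Rightarrow> nat graph \<Rightarrow> (nat \<Rightarrow> 'a set) \<Rightarrow> bool" where
  "tree_decomposition G T B \<longleftrightarrow> is_tree T \<and>
     (\<forall>t\<in>verts T. B t \<subseteq> verts G) \<and>
     (\<forall>v\<in>verts G. \<exists>t\<in>verts T. v \<in> B t) \<and>
     (\<forall>e\<in>edges G. \<exists>t\<in>verts T. e \<subseteq> B t) \<and>
     (\<forall>v\<in>verts G. connected_in T {t\<in>verts T. v \<in> B t})"

definition decomposition_width :: "nat graph \<Rightarrow> (nat \<Rightarrow> 'a set) \<Rightarrow> nat" where
  "decomposition_width T B = Max ((\<lambda>t. card (B t)) ` verts T) - 1"

definition treewidth :: "'a graph \<Rightarrow> nat" where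
  "treewidth G = (LEAST w. \<exists>T B. tree_decomposition G T B \<and> decomposition_width T B = w)"

text \<open>CNF formulas: a CNF is a set of clauses, a clause a set of literals,
  a literal a pair (variable, polarity).\<close>
type_synonym 'v cnf = "('v \<times> bool) set set"

definition cnf_vars :: "'v cnf \<Rightarrow> 'v set" where
  "cnf_vars F = (\<Union>C\<in>F. fst ` C)"

definition primal_graph :: "'v cnf \<Rightarrow> 'v graph" where
  "primal_graph F = (cnf_vars F,
     {{x, y} | x y. x \<noteq> y \<and> (\<exists>C\<in>F. x \<in> fst ` C \<and> y \<in> fst ` C)})"

text \<open>Variables of CNF(G): X_u for vertices and X_{u,v} = X_{v,u} for edges.\<close>
datatype 'a gvar = VVar 'a | EVar "'a set"

definition CNF_of_graph :: "'a graph \<Rightarrow> 'a gvar cnf" where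
  "CNF_of_graph G = {{(VVar u, True), (EVar {u, v}, True), (VVar v, True)} | u v.
                      {u, v} \<in> edges G}"

definition bintree :: "nat \<Rightarrow> nat graph" where
  "bintree r = ({1..<2^(r+1)},
     {{i, c} | i c. 1 \<le> i \<and> c < 2^(r+1) \<and> (c = 2*i \<or> c = 2*i+1)})"

text \<open>CT_{r,k}: each tree node a replaced by the clique {a} x {0..<k}; cliques of
  adjacent tree nodes completely joined.\<close>
definition CT :: "nat \<Rightarrow> nat \<Rightarrow> (nat \<times> nat) graph" where
  "CT r k = (verts (bintree r) \<times> {..<k},
     {{(a, i), (b, j)} | a b i j. a \<in> verts (bintree r) \<and> b \<in> verts (bintree r) \<and>
        i < k \<and> j < k \<and> (a, i) \<noteq> (b, j) \<and> (a = b \<or> {a, b} \<in> edges (bintree r))})"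

definition F :: "nat \<Rightarrow> nat \<Rightarrow> (nat \<times> nat) gvar cnf" where
  "F r k = CNF_of_graph (CT r k)"

end

(*
  Hang one new leaf, with bag {X_u, X_uv, X_v}, off a bag containing the edge uv for every edge of
  a graph G: together with the bags of a tree decomposition of G (restricted to the vertex
  variables) this yields a tree decomposition of the primal graph of CNF(G), so its width is at
  most max(width, 2). The graph CT_{r,k} is decomposed along T_r itself, the bag of a node being
  the clique of the node together with the clique of its parent; these bags have 2k elements.
*)
theory Submission
  imports Defs
begin

definition induced_adj :: "'a graph \<Rightarrow> 'a set \<Rightarrow> ('a \<times> 'a) set" where
  "induced_adj G S = {(a, b). {a, b} \<in> edges G \<and> a \<in> S \<and> b \<in> S}"

lemma connected_in_iff_induced_adj:
  "connected_in G S \<longleftrightarrow> (\<forall>x\<in>S. \<forall>y\<in>S. (x, y) \<in> (induced_adj G S)\<^sup>*)"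
  by (simp add: connected_in_def induced_adj_def)

lemma induced_adj_mono:
  "edges G \<subseteq> edges G' \<Longrightarrow> S \<subseteq> S' \<Longrightarrow> induced_adj G S \<subseteq> induced_adj G' S'"
  by (auto simp: induced_adj_def)

lemma connected_inI_root:
  assumes "c \<in> S" and "\<And>x. x \<in> S \<Longrightarrow> (x, c) \<in> (induced_adj G S)\<^sup>*"
  shows "connected_in G S"
proof -
  have "sym (induced_adj G S)" by (auto simp: sym_def induced_adj_def insert_commute)
  then have "sym ((induced_adj G S)\<^sup>*)" by (rule sym_rtrancl)
  then show ?thesis
    using assms unfolding connected_in_iff_induced_adj by (meson rtrancl_trans symD)
qed

lemma is_tree_parent:
  fixes par :: "nat \<Rightarrow> nat"
  assumes fin: "finite V" and root: "\<rho> \<in> V"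
    and par: "\<And>x. x \<in> V - {\<rho>} \<Longrightarrow> par x \<in> V \<and> par x < x"
  shows "is_tree (V, (\<lambda>x. {x, par x}) ` (V - {\<rho>}))" (is "is_tree ?T")
proof -
  have simple: "simple_graph ?T"
    using fin par by (fastforce simp: simple_graph_def verts_def edges_def card_insert_if)
  have "inj_on (\<lambda>x. {x, par x}) (V - {\<rho>})"
    by (rule inj_onI) (metis doubleton_eq_iff less_asym par)
  then have card: "card (edges ?T) = card (verts ?T) - 1"
    using fin root by (simp add: edges_def verts_def card_image)
  have "(x, \<rho>) \<in> (induced_adj ?T V)\<^sup>*" if "x \<in> V" for x
    using that
  proof (induction x rule: less_induct)
    case (less x)
    show ?case
    proof (cases "x = \<rho>")
      case False
      then have "(x, par x) \<in> induced_adj ?T V"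
        using less.prems par by (auto simp: induced_adj_def edges_def)
      with less.IH less.prems False par show ?thesis
        by (meson DiffI converse_rtrancl_into_rtrancl singletonD)
    qed simp
  qed
  then have "connected_in ?T V" by (rule connected_inI_root[OF root])
  with simple card root show ?thesis by (auto simp: is_tree_def verts_def)
qed

lemma connected_in_add_leaves:
  assumes conn: "connected_in T (verts T)" and c: "c \<in> verts T" and att: "att ` L \<subseteq> verts T"
  shows "connected_in (verts T \<union> l ` L, edges T \<union> (\<lambda>x. {l x, att x}) ` L) (verts T \<union> l ` L)"
    (is "connected_in ?T ?V")
proof (rule connected_inI_root)
  have step: "induced_adj T (verts T) \<subseteq> induced_adj ?T ?V"
    by (rule induced_adj_mono) (auto simp: edges_def)
  have reach: "(x, c) \<in> (induced_adj ?T ?V)\<^sup>*" if "x \<in> verts T" for x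
    using conn c that rtrancl_mono[OF step] by (auto simp: connected_in_iff_induced_adj)
  show "c \<in> ?V" using c by blast
  fix x assume x: "x \<in> ?V"
  show "(x, c) \<in> (induced_adj ?T ?V)\<^sup>*"
  proof (cases "x \<in> verts T")
    case False
    then obtain y where y: "y \<in> L" "x = l y" using x by blast
    then have "(x, att y) \<in> induced_adj ?T ?V"
      using att by (auto simp: induced_adj_def edges_def)
    with reach y att show ?thesis by (meson converse_rtrancl_into_rtrancl image_subset_iff)
  qed (use reach in blast)
qed

lemma is_tree_add_leaves:
  assumes tree: "is_tree T" and fin: "finite L" and inj: "inj_on l L"
    and fresh: "l ` L \<inter> verts T = {}" and att: "att ` L \<subseteq> verts T"
  shows "is_tree (verts T \<union> l ` L, edges T \<union> (\<lambda>x. {l x, att x}) ` L)" (is "is_tree ?T")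
proof -
  have T: "simple_graph T" "verts T \<noteq> {}" "connected_in T (verts T)"
      "card (edges T) = card (verts T) - 1"
    using tree by (auto simp: is_tree_def)
  have finT: "finite (verts T)" and edgesT: "\<And>e. e \<in> edges T \<Longrightarrow> e \<subseteq> verts T \<and> card e = 2"
    using T(1) by (auto simp: simple_graph_def)
  have finE: "finite (edges T)"
    using finT edgesT by (meson PowI finite_Pow_iff finite_subset subsetI)
  have "l x \<noteq> att x" if "x \<in> L" for x using that fresh att by blast
  then have simple: "simple_graph ?T"
    using finT fin edgesT att by (auto simp: simple_graph_def verts_def edges_def)
  have "inj_on (\<lambda>x. {l x, att x}) L"
    by (rule inj_onI) (metis att disjoint_iff doubleton_eq_iff fresh image_eqI inj inj_on_contraD subsetD)
  moreover have "edges T \<inter> (\<lambda>x. {l x, att x}) ` L = {}"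
    using edgesT fresh by blast
  ultimately have "card (edges ?T) = card (edges T) + card L"
    using finE fin unfolding edges_def snd_conv by (subst card_Un_disjoint) (auto simp: card_image)
  moreover have "card (verts ?T) = card (verts T) + card L"
    using finT fin fresh inj unfolding verts_def fst_conv
    by (subst card_Un_disjoint) (auto simp: card_image)
  moreover have "card (verts T) > 0" using T(2) finT by (simp add: card_gt_0_iff)
  ultimately have card: "card (edges ?T) = card (verts ?T) - 1"
    using T(4) by simp
  obtain c where c: "c \<in> verts T" using T(2) by blast
  have "connected_in ?T (verts ?T)"
    unfolding verts_def[of ?T] fst_conv by (rule connected_in_add_leaves[OF T(3) c att])
  with simple card T(2) show ?thesis by (simp add: is_tree_def verts_def)
qed

lemma treewidth_le_decomposition_width:
  "tree_decomposition G T B \<Longrightarrow> treewidth G \<le> decomposition_width T B"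
  unfolding treewidth_def by (rule Least_le) blast

lemma decomposition_width_le:
  assumes "is_tree T" and "\<And>t. t \<in> verts T \<Longrightarrow> card (B t) \<le> Suc w"
  shows "decomposition_width T B \<le> w"
proof -
  have "finite (verts T)" "verts T \<noteq> {}" using assms(1) by (auto simp: is_tree_def simple_graph_def)
  then have "(MAX t\<in>verts T. card (B t)) \<le> Suc w" using assms(2) by simp
  then show ?thesis by (simp add: decomposition_width_def)
qed

lemma card_bag_le_decomposition_width:
  assumes "is_tree T" and "t \<in> verts T"
  shows "card (B t) \<le> Suc (decomposition_width T B)"
proof -
  have "finite (verts T)" using assms(1) by (auto simp: is_tree_def simple_graph_def)
  then have "card (B t) \<le> (MAX t\<in>verts T. card (B t))" using assms(2) by simp
  then show ?thesis by (simp add: decomposition_width_def)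
qed

definition edge_vars :: "'a set \<Rightarrow> 'a gvar set" where
  "edge_vars e = insert (EVar e) (VVar ` e)"

lemma clause_vars_CNF_of_graph:
  assumes "simple_graph G"
  shows "(\<lambda>C. fst ` C) ` CNF_of_graph G = edge_vars ` edges G"
proof -
  have vars: "fst ` {(VVar u, True), (EVar {u, v}, True), (VVar v, True)} = edge_vars {u, v}"
    for u v :: 'a
    by (simp add: edge_vars_def insert_commute)
  have pair: "\<exists>u v. e = {u, v}" if "e \<in> edges G" for e
  proof -
    have "card e = 2" using assms that by (simp add: simple_graph_def)
    then show ?thesis by (meson card_2_iff)
  qed
  show ?thesis
  proof (intro equalityI subsetI)
    fix X assume "X \<in> (\<lambda>C. fst ` C) ` CNF_of_graph G"
    then obtain u v where "{u, v} \<in> edges G" "X = fst ` {(VVar u, True), (EVar {u, v}, True), (VVar v, True)}"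
      unfolding CNF_of_graph_def by blast
    then show "X \<in> edge_vars ` edges G" by (metis vars image_eqI)
  next
    fix X assume "X \<in> edge_vars ` edges G"
    then obtain u v where uv: "{u, v} \<in> edges G" "X = edge_vars {u, v}" using pair by blast
    then have "{(VVar u, True), (EVar {u, v}, True), (VVar v, True)} \<in> CNF_of_graph G"
      unfolding CNF_of_graph_def by blast
    then show "X \<in> (\<lambda>C. fst ` C) ` CNF_of_graph G" using uv(2) vars by (metis image_eqI)
  qed
qed

lemma verts_primal_CNF_of_graph:
  "simple_graph G \<Longrightarrow> verts (primal_graph (CNF_of_graph G)) = (\<Union>e\<in>edges G. edge_vars e)"
  by (simp add: primal_graph_def verts_def cnf_vars_def flip: clause_vars_CNF_of_graph)

lemma edges_primal_CNF_of_graph: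
  assumes "simple_graph G" and "x \<in> edges (primal_graph (CNF_of_graph G))"
  shows "\<exists>e\<in>edges G. x \<subseteq> edge_vars e"
proof -
  obtain C where C: "C \<in> CNF_of_graph G" "x \<subseteq> fst ` C"
    using assms(2) unfolding primal_graph_def edges_def snd_conv by blast
  then have "fst ` C \<in> edge_vars ` edges G"
    using clause_vars_CNF_of_graph[OF assms(1)] by blast
  with C(2) show ?thesis by blast
qed

lemma card_edge_vars_le:
  assumes "finite e"
  shows "card (edge_vars e) \<le> Suc (card e)"
proof -
  have "card (edge_vars e) \<le> Suc (card (VVar ` e))"
    using assms by (simp add: edge_vars_def card_insert_if)
  also have "card (VVar ` e) \<le> card e" by (rule card_image_le[OF assms])
  finally show ?thesis by simp
qed

context
  fixes G :: "'a graph" and T :: "nat graph" and B :: "nat \<Rightarrow> 'a set"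
    and h :: "nat \<Rightarrow> 'a set" and n M :: nat and att :: "nat \<Rightarrow> nat"
  assumes G: "simple_graph G" and td: "tree_decomposition G T B"
    and h: "bij_betw h {..<n} (edges G)"
    and M: "\<And>t. t \<in> verts T \<Longrightarrow> t < M"
    and att: "\<And>i. i < n \<Longrightarrow> att i \<in> verts T \<and> h i \<subseteq> B (att i)"
begin

text \<open>The edge \<open>h i\<close> becomes the leaf \<open>M + i\<close> hanging off \<open>att i\<close>. The old bags are cut down
  to \<open>\<Union>(edges G)\<close> because isolated vertices of \<open>G\<close> are not variables of \<open>CNF_of_graph G\<close>.\<close>

abbreviation leaf_tree :: "nat graph" where
  "leaf_tree \<equiv> (verts T \<union> (+) M ` {..<n}, edges T \<union> (\<lambda>i. {M + i, att i}) ` {..<n})"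

abbreviation leaf_bags :: "nat \<Rightarrow> 'a gvar set" where
  "leaf_bags t \<equiv> if t < M then VVar ` (B t \<inter> \<Union>(edges G)) else edge_vars (h (t - M))"

lemma verts_leaf_tree: "verts leaf_tree = verts T \<union> (+) M ` {..<n}"
  by (simp add: verts_def)

lemma verts_leaf_tree_cases:
  "t \<in> verts leaf_tree \<Longrightarrow> t \<in> verts T \<and> t < M \<or> (\<exists>i<n. t = M + i \<and> \<not> t < M)"
  using M unfolding verts_leaf_tree by auto

lemma is_tree_leaf_tree: "is_tree leaf_tree"
proof (rule is_tree_add_leaves)
  show "is_tree T" using td by (simp add: tree_decomposition_def)
qed (use M att in force)+

lemma verts_primal_eq_leaves: "verts (primal_graph (CNF_of_graph G)) = (\<Union>i<n. edge_vars (h i))"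
  unfolding verts_primal_CNF_of_graph[OF G] bij_betw_imp_surj_on[OF h, symmetric]
  by (simp add: image_image)

lemma leaf_bags_subset:
  assumes t: "t \<in> verts leaf_tree"
  shows "leaf_bags t \<subseteq> verts (primal_graph (CNF_of_graph G))"
proof -
  have "VVar ` \<Union>(edges G) \<subseteq> verts (primal_graph (CNF_of_graph G))"
    using verts_primal_CNF_of_graph[OF G] by (auto simp: edge_vars_def)
  then show ?thesis using verts_leaf_tree_cases[OF t] verts_primal_eq_leaves by auto
qed

lemma leaf_bags_cover:
  assumes X: "X \<subseteq> edge_vars e" and e: "e \<in> edges G"
  shows "\<exists>t\<in>verts leaf_tree. X \<subseteq> leaf_bags t"
proof -
  obtain i where "i < n" "e = h i" using h e by (auto simp: bij_betw_def)
  then show ?thesis using X unfolding verts_leaf_tree by force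
qed

lemma connected_leaf_bags_EVar:
  assumes x: "EVar e \<in> verts (primal_graph (CNF_of_graph G))"
  shows "connected_in leaf_tree {t \<in> verts leaf_tree. EVar e \<in> leaf_bags t}"
proof -
  obtain i where i: "i < n" "e = h i" using x by (auto simp: verts_primal_eq_leaves edge_vars_def)
  have "EVar e \<in> leaf_bags t \<longleftrightarrow> t = M + i" if "t \<in> verts leaf_tree" for t
    using verts_leaf_tree_cases[OF that]
  proof (elim disjE exE conjE)
    fix j assume j: "j < n" "t = M + j"
    have "h i = h j \<longleftrightarrow> j = i"
      using h i(1) j(1) by (auto simp: bij_betw_def inj_on_def)
    then show ?thesis using j i(2) by (simp add: edge_vars_def image_iff)
  qed (simp add: image_iff)
  then have "{t \<in> verts leaf_tree. EVar e \<in> leaf_bags t} = {t \<in> verts leaf_tree. t = M + i}"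
    by blast
  also have "\<dots> = {M + i}" using i(1) by (auto simp: verts_leaf_tree)
  finally show ?thesis by (auto intro: connected_inI_root)
qed

lemma connected_leaf_bags_VVar:
  assumes x: "VVar u \<in> verts (primal_graph (CNF_of_graph G))"
  shows "connected_in leaf_tree {t \<in> verts leaf_tree. VVar u \<in> leaf_bags t}"
proof -
  obtain i where i: "i < n" "u \<in> h i" using x by (auto simp: verts_primal_eq_leaves edge_vars_def)
  then have u: "u \<in> verts G" "u \<in> \<Union>(edges G)"
    using G h by (auto simp: simple_graph_def bij_betw_def)
  let ?S = "{t \<in> verts T. u \<in> B t}"
  let ?S' = "?S \<union> (+) M ` {j. j < n \<and> u \<in> h j}"
  have "VVar u \<in> leaf_bags t \<longleftrightarrow> t \<in> ?S'" if "t \<in> verts leaf_tree" for t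
    using verts_leaf_tree_cases[OF that] M u(2) by (auto simp: edge_vars_def)
  then have "{t \<in> verts leaf_tree. VVar u \<in> leaf_bags t} = {t \<in> verts leaf_tree. t \<in> ?S'}"
    by blast
  also have "\<dots> = ?S'" by (auto simp: verts_leaf_tree)
  finally have S': "{t \<in> verts leaf_tree. VVar u \<in> leaf_bags t} = ?S'" .
  have root: "att i \<in> ?S" using att i by blast
  have mono: "induced_adj T ?S \<subseteq> induced_adj leaf_tree ?S'"
    by (rule induced_adj_mono) (auto simp: edges_def)
  have old: "(t, att i) \<in> (induced_adj leaf_tree ?S')\<^sup>*" if "t \<in> ?S" for t
    using td u(1) root that rtrancl_mono[OF mono]
    by (auto simp: tree_decomposition_def connected_in_iff_induced_adj)
  show ?thesis unfolding S'
  proof (rule connected_inI_root)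
    show "att i \<in> ?S'" using root by blast
  next
    fix t assume "t \<in> ?S'"
    then consider "t \<in> ?S" | j where "j < n" "u \<in> h j" "t = M + j" by blast
    then show "(t, att i) \<in> (induced_adj leaf_tree ?S')\<^sup>*"
    proof cases
      case 2
      then have "att j \<in> ?S" using att by blast
      moreover have "(t, att j) \<in> induced_adj leaf_tree ?S'"
        using 2 \<open>att j \<in> ?S\<close> by (auto simp: induced_adj_def edges_def)
      ultimately show ?thesis using old by (meson converse_rtrancl_into_rtrancl)
    qed (rule old)
  qed
qed

lemma tree_decomposition_leaf_tree:
  "tree_decomposition (primal_graph (CNF_of_graph G)) leaf_tree leaf_bags"
proof -
  have "\<exists>t\<in>verts leaf_tree. x \<in> leaf_bags t" if x: "x \<in> verts (primal_graph (CNF_of_graph G))" for x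
  proof -
    obtain e where "e \<in> edges G" "{x} \<subseteq> edge_vars e"
      using x by (auto simp: verts_primal_CNF_of_graph[OF G])
    then show ?thesis using leaf_bags_cover by blast
  qed
  moreover have "connected_in leaf_tree {t \<in> verts leaf_tree. x \<in> leaf_bags t}"
    if "x \<in> verts (primal_graph (CNF_of_graph G))" for x
    using that connected_leaf_bags_EVar connected_leaf_bags_VVar by (cases x) auto
  ultimately show ?thesis
    using is_tree_leaf_tree leaf_bags_subset leaf_bags_cover edges_primal_CNF_of_graph[OF G]
    unfolding tree_decomposition_def by meson
qed

lemma decomposition_width_leaf_tree:
  "decomposition_width leaf_tree leaf_bags \<le> max (decomposition_width T B) 2"
proof (rule decomposition_width_le[OF is_tree_leaf_tree])
  fix t assume t: "t \<in> verts leaf_tree"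
  have treeT: "is_tree T" and finG: "finite (verts G)" using td G
    by (auto simp: tree_decomposition_def simple_graph_def)
  show "card (leaf_bags t) \<le> Suc (max (decomposition_width T B) 2)"
  proof (cases "t < M")
    case True
    then have t: "t \<in> verts T" using verts_leaf_tree_cases[OF t] by auto
    then have fin: "finite (B t)"
      using td finG by (meson finite_subset tree_decomposition_def)
    have "card (leaf_bags t) \<le> card (B t \<inter> \<Union>(edges G))" using True fin by (simp add: card_image_le)
    also have "\<dots> \<le> card (B t)" using fin by (simp add: card_mono)
    also have "\<dots> \<le> Suc (decomposition_width T B)" by (rule card_bag_le_decomposition_width[OF treeT t])
    finally show ?thesis by simp
  next
    case False
    then have "h (t - M) \<in> edges G" using verts_leaf_tree_cases[OF t] bij_betw_apply[OF h] by auto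
    then have "finite (h (t - M))" "card (h (t - M)) = 2"
      using G by (auto simp: simple_graph_def card_ge_0_finite)
    then have "card (edge_vars (h (t - M))) \<le> 3" using card_edge_vars_le by fastforce
    then show ?thesis using False by simp
  qed
qed

end

lemma treewidth_primal_CNF_of_graph_le:
  assumes G: "simple_graph G" and td: "tree_decomposition G T B"
  shows "treewidth (primal_graph (CNF_of_graph G)) \<le> max (decomposition_width T B) 2"
proof -
  have "finite (edges G)"
    using G unfolding simple_graph_def by (meson PowI finite_Pow_iff finite_subset subsetI)
  then obtain h where h: "bij_betw h {..<card (edges G)} (edges G)"
    using ex_bij_betw_nat_finite lessThan_atLeast0 by metis
  have "finite (verts T)" using td by (auto simp: tree_decomposition_def is_tree_def simple_graph_def)
  then have M: "t \<in> verts T \<Longrightarrow> t < Suc (Max (verts T))" for t by (simp add: le_imp_less_Suc)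
  have "\<exists>t\<in>verts T. h i \<subseteq> B t" if "i < card (edges G)" for i
    using td bij_betw_apply[OF h] that by (simp add: tree_decomposition_def)
  then obtain att where att: "\<And>i. i < card (edges G) \<Longrightarrow> att i \<in> verts T \<and> h i \<subseteq> B (att i)"
    by metis
  show ?thesis
    using treewidth_le_decomposition_width[OF tree_decomposition_leaf_tree[OF G td h M att]]
      decomposition_width_leaf_tree[OF G td h M att]
    by linarith
qed

lemma verts_bintree: "verts (bintree r) = {1..<2^(r+1)}"
  by (simp add: bintree_def verts_def)

lemma edges_bintree: "edges (bintree r) = (\<lambda>c. {c, c div 2}) ` ({1..<2^(r+1)} - {1})"
proof -
  have "{{i, c} | i c :: nat. 1 \<le> i \<and> c < 2^(r+1) \<and> (c = 2*i \<or> c = 2*i+1)}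
        = (\<lambda>c. {c, c div 2}) ` ({1..<2^(r+1)} - {1})" (is "?E = ?P")
  proof
    show "?E \<subseteq> ?P"
    proof
      fix e assume "e \<in> ?E"
      then obtain i c :: nat where e: "e = {i, c}" "1 \<le> i" "c < 2^(r+1)" "c = 2*i \<or> c = 2*i+1"
        by blast
      then have "c \<in> {1..<2^(r+1)} - {1}" "c div 2 = i" by auto
      moreover have "e = {c, c div 2}" using e(1) \<open>c div 2 = i\<close> by blast
      ultimately show "e \<in> ?P" by blast
    qed
    show "?P \<subseteq> ?E"
    proof
      fix e assume "e \<in> ?P"
      then obtain c :: nat where "e = {c, c div 2}" "c \<in> {1..<2^(r+1)} - {1}" by blast
      then have c: "e = {c div 2, c}" "2 \<le> c" "c < 2^(r+1)" by auto
      have "c = 2 * (c div 2) \<or> c = 2 * (c div 2) + 1" by presburger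
      with c have "1 \<le> c div 2 \<and> c < 2^(r+1) \<and> (c = 2 * (c div 2) \<or> c = 2 * (c div 2) + 1)"
        by auto
      with c(1) show "e \<in> ?E" by blast
    qed
  qed
  then show ?thesis by (simp add: bintree_def edges_def)
qed

lemma is_tree_bintree: "is_tree (bintree r)"
proof -
  have "1 < (2::nat)^(r+1)" by (rule one_less_power) auto
  then have "is_tree ({1..<2^(r+1)}, (\<lambda>c::nat. {c, c div 2}) ` ({1..<2^(r+1)} - {1}))"
    by (intro is_tree_parent) auto
  moreover have "bintree r = (verts (bintree r), edges (bintree r))" by (simp add: verts_def edges_def)
  ultimately show ?thesis unfolding verts_bintree edges_bintree by simp
qed

lemma simple_graph_CT: "simple_graph (CT r k)"
proof -
  have "e \<subseteq> verts (CT r k) \<and> card e = 2" if e: "e \<in> edges (CT r k)" for e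
  proof -
    obtain a b i j where "e = {(a, i), (b, j)}" "(a, i) \<noteq> (b, j)"
      "a \<in> verts (bintree r)" "b \<in> verts (bintree r)" "i < k" "j < k"
      using e unfolding CT_def edges_def snd_conv by blast
    then show ?thesis by (simp add: CT_def verts_def)
  qed
  moreover have "finite (verts (CT r k))" by (simp add: CT_def verts_def bintree_def)
  ultimately show ?thesis unfolding simple_graph_def by blast
qed

text \<open>The bag of node \<open>t\<close> is the clique of \<open>t\<close> and of its parent \<open>t div 2\<close>; the root \<open>1\<close> is
  treated as its own parent.\<close>

definition CT_bag :: "nat \<Rightarrow> nat \<Rightarrow> (nat \<times> nat) set" where
  "CT_bag k t = {t, max 1 (t div 2)} \<times> {..<k}"

lemma tree_decomposition_CT: "tree_decomposition (CT r k) (bintree r) (CT_bag k)"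
  unfolding tree_decomposition_def
proof (intro conjI ballI)
  let ?V = "verts (bintree r)"
  show "is_tree (bintree r)" by (rule is_tree_bintree)
  show "CT_bag k t \<subseteq> verts (CT r k)" if t: "t \<in> ?V" for t
  proof -
    have "max 1 (t div 2) \<in> ?V" using t by (auto simp: verts_bintree max_def)
    with t show ?thesis by (auto simp: CT_bag_def CT_def verts_def)
  qed
  show "\<exists>t\<in>?V. v \<in> CT_bag k t" if "v \<in> verts (CT r k)" for v
    using that by (auto simp: CT_bag_def CT_def verts_def)
  show "\<exists>t\<in>?V. e \<subseteq> CT_bag k t" if e: "e \<in> edges (CT r k)" for e
  proof -
    obtain a b i j where ij: "e = {(a, i), (b, j)}" "a \<in> ?V" "i < k" "j < k"
      and ab: "a = b \<or> {a, b} \<in> edges (bintree r)"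
      using e unfolding CT_def edges_def snd_conv by blast
    from ab show ?thesis
    proof
      assume "{a, b} \<in> edges (bintree r)"
      then obtain c where c: "c \<in> {1..<2^(r+1)} - {1}" "{a, b} = {c, c div 2}"
        unfolding edges_bintree by blast
      then have "c \<in> ?V" "1 \<le> c div 2" by (auto simp: verts_bintree)
      moreover have "{a, b} \<subseteq> {c, max 1 (c div 2)}" using c(2) \<open>1 \<le> c div 2\<close> by simp
      then have "e \<subseteq> CT_bag k c" using ij by (auto simp: CT_bag_def)
      ultimately show ?thesis by blast
    qed (use ij in \<open>auto simp: CT_bag_def\<close>)
  qed
  show "connected_in (bintree r) {t \<in> ?V. v \<in> CT_bag k t}" if v: "v \<in> verts (CT r k)" for v
  proof -
    obtain a i where ai: "v = (a, i)" "a \<in> ?V" "i < k"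
      using v by (auto simp: CT_def verts_def)
    let ?S = "{t \<in> ?V. v \<in> CT_bag k t}"
    have S: "t \<in> ?S \<longleftrightarrow> t \<in> ?V \<and> (a = t \<or> a = max 1 (t div 2))" for t
      using ai by (auto simp: CT_bag_def)
    have a: "a \<in> ?S" using ai S by simp
    show ?thesis
    proof (rule connected_inI_root[OF a])
      fix t assume t: "t \<in> ?S"
      show "(t, a) \<in> (induced_adj (bintree r) ?S)\<^sup>*"
      proof (cases "t = a")
        case False
        with t S have "a = max 1 (t div 2)" "t \<in> ?V" by auto
        moreover from this False have "t \<noteq> 1" by auto
        ultimately have "t \<in> {1..<2^(r+1)} - {1}" "a = t div 2" by (auto simp: verts_bintree)
        then have "{t, a} \<in> edges (bintree r)" unfolding edges_bintree by blast
        with t a have "(t, a) \<in> induced_adj (bintree r) ?S" by (simp add: induced_adj_def)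
        then show ?thesis by blast
      qed simp
    qed
  qed
qed

lemma decomposition_width_CT: "decomposition_width (bintree r) (CT_bag k) \<le> 2 * k - 1"
proof (rule decomposition_width_le[OF is_tree_bintree])
  fix t
  have "card (CT_bag k t) = card {t, max 1 (t div 2)} * k"
    by (simp add: CT_bag_def card_cartesian_product)
  also have "\<dots> \<le> 2 * k" by (simp add: card_insert_le_m1)
  finally show "card (CT_bag k t) \<le> Suc (2 * k - 1)" by linarith
qed

theorem lemma1:
  fixes r k :: nat
  assumes "k \<ge> 2"
  shows "treewidth (primal_graph (F r k)) \<le> 2 * k - 1"
proof -
  have "treewidth (primal_graph (F r k)) \<le> max (decomposition_width (bintree r) (CT_bag k)) 2"
    unfolding F_def by (rule treewidth_primal_CNF_of_graph_le[OF simple_graph_CT tree_decomposition_CT])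
  also have "\<dots> \<le> 2 * k - 1" using decomposition_width_CT[of r k] assms by simp
  finally show ?thesis .
qed

end
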